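(* Let $r>2$. Then \[\sum_{k_1,\dots,k_r=1}^K\hat I_K^{\pm}(k_1)\cdots\hat I_K^{\pm}(k_r)\,q^{-(k_1+\dots+k_r)/2}\sum_{\substack{m\mid\gcd(k_1,\dots,k_r)\\ mp\nmid\gcd(k_1,\dots,k_r)}}\pi(m)m^r=O(1),\] with the bound independent of $K$.
   Context: $q$ is a power of an odd prime $p$; $\pi(m)$ is the number of monic irreducible polynomials of degree $m$ in $\mathbb{F}_q[X]$. $\mathcal{I}=[-\beta/2,\beta/2]$, $0<\beta<1$. $e(x)=e^{2\pi ix}$. For $K\ge1$, $I_K^{\pm}(x)=\sum_{|k|\le K}\hat I_K^{\pm}(k)e(kx)$ are the Beurling–Selberg majorant/minorant trigonometric polynomials of degree $\le K$ of $\chi_{\mathcal{I}}$ (Montgomery, Ten Lectures, Ch. 1.2): $I_K^-\le\chi_{\mathcal{I}}\le I_K^+$, $\int I_K^{\pm}=|\mathcal{I}|\pm\frac1{K+1}$, even, and $|\hat I_K^{\pm}(k)-\hat\chi_{\mathcal{I}}(k)|\le\frac1{K+1}$. *)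

theory Defs
  imports "HOL-Analysis.Analysis" "HOL-Computational_Algebra.Polynomial"
begin

definition e :: "real \<Rightarrow> complex" where
  "e x = cis (2 * pi * x)"

text \<open>Indicator of the interval [-beta/2, beta/2], viewed on R/Z (1-periodic).\<close>
definition chiI :: "real \<Rightarrow> real \<Rightarrow> real" where
  "chiI \<beta> x = (if \<exists>j::int. \<bar>x - of_int j\<bar> \<le> \<beta> / 2 then 1 else 0)"

definition chi_hat :: "real \<Rightarrow> int \<Rightarrow> complex" where
  "chi_hat \<beta> k = integral {-\<beta>/2..\<beta>/2} (\<lambda>x. e (- (of_int k * x)))"

definition trig_poly :: "(int \<Rightarrow> complex) \<Rightarrow> nat \<Rightarrow> real \<Rightarrow> complex" where
  "trig_poly c K x = (\<Sum>k\<in>{- int K..int K}. c k * e (of_int k * x))"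

text \<open>Coefficients (Ih K k) of a family of Beurling--Selberg majorants (s = 1) or
  minorants (s = -1) of the indicator of the interval, with the properties listed
  in the context.\<close>
definition BS_coeffs :: "real \<Rightarrow> real \<Rightarrow> (nat \<Rightarrow> int \<Rightarrow> complex) \<Rightarrow> bool" where
  "BS_coeffs \<beta> s Ih \<longleftrightarrow>
     (\<forall>K\<ge>1.
        (\<forall>x. Im (trig_poly (Ih K) K x) = 0) \<and>
        (\<forall>x. s * (Re (trig_poly (Ih K) K x) - chiI \<beta> x) \<ge> 0) \<and>
        (\<forall>k. Ih K (- k) = Ih K k) \<and>
        integral {0..1} (trig_poly (Ih K) K) = complex_of_real (\<beta> + s / (real K + 1)) \<and>
        (\<forall>k. norm (Ih K k - chi_hat \<beta> k) \<le> 1 / (real K + 1)))"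

definition irr_count :: "'a::{field,finite} itself \<Rightarrow> nat \<Rightarrow> nat" where
  "irr_count _ m = card {f :: 'a poly. lead_coeff f = 1 \<and> irreducible f \<and> degree f = m}"

end

theory Submission
  imports Defs
begin

text \<open>
  Each coefficient satisfies |Ih K k| <= beta + 1, being within 1/(K+1) of a Fourier
  coefficient of an interval of length beta. With g the gcd of k_1, ..., k_r, the divisor
  sum is at most g^(r+1) q^g because pi(m) <= q^m. Since g <= k_i and r >= 3, we have
  q^(g - (k_1 + ... + k_r)/2) <= q^(-(k_1 + ... + k_r)/6) and g^(r+1) <= k_1^2 ... k_r^2,
  so each summand is at most (beta + 1)^r times a product of terms j^2 q^(-j/6), and the
  sum over the box [1,K]^r is bounded by the r-th power of the convergent series
  sum_j j^2 q^(-j/6). About q only q >= 2 is used.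
\<close>

lemma card_monic_polys_le:
  fixes A :: "'a::{comm_ring_1,finite} poly set"
  assumes "\<And>f. f \<in> A \<Longrightarrow> lead_coeff f = 1 \<and> degree f = m"
  shows "card A \<le> CARD('a) ^ m"
proof -
  have "inj_on (\<lambda>f. restrict (coeff f) {..<m}) A"
  proof (rule inj_onI)
    fix f g assume f: "f \<in> A" and g: "g \<in> A"
      and eq: "restrict (coeff f) {..<m} = restrict (coeff g) {..<m}"
    show "f = g"
    proof (rule poly_eqI)
      fix i
      consider "i < m" | "i = m" | "i > m" by linarith
      then show "coeff f i = coeff g i"
        using assms[OF f] assms[OF g] fun_cong[OF eq, of i] by cases (auto simp: coeff_eq_0)
    qed
  qed
  then have "card A \<le> card (PiE {..<m} (\<lambda>_. UNIV :: 'a set))"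
  proof (rule card_inj_on_le)
    show "(\<lambda>f. restrict (coeff f) {..<m}) ` A \<subseteq> PiE {..<m} (\<lambda>_. UNIV)"
      by (intro image_subsetI restrict_PiE) simp
  qed (simp add: finite_PiE)
  then show ?thesis by (simp add: card_PiE)
qed

lemma irr_count_le: "irr_count TYPE('a::{field,finite}) m \<le> CARD('a) ^ m"
  unfolding irr_count_def by (rule card_monic_polys_le) auto

lemma sum_irr_count_divisors_le:
  fixes g r :: nat
  assumes "g \<noteq> 0" and "A \<subseteq> {m. m dvd g}"
  shows "(\<Sum>m\<in>A. irr_count TYPE('a::{field,finite}) m * m ^ r) \<le> g ^ (r + 1) * CARD('a) ^ g"
proof -
  have "A \<subseteq> {1..g}"
  proof
    fix m assume "m \<in> A"
    then have "m dvd g" using assms(2) by blast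
    then show "m \<in> {1..g}" using assms(1) by (auto intro: dvd_imp_le Nat.gr0I)
  qed
  then have "(\<Sum>m\<in>A. irr_count TYPE('a) m * m ^ r) \<le> (\<Sum>m\<in>{1..g}. irr_count TYPE('a) m * m ^ r)"
    by (intro sum_mono2) auto
  also have "\<dots> \<le> (\<Sum>m\<in>{1..g}. CARD('a) ^ g * g ^ r)"
  proof (intro sum_mono mult_le_mono)
    fix m assume m: "m \<in> {1..g}"
    have "irr_count TYPE('a) m \<le> CARD('a) ^ m" by (rule irr_count_le)
    also have "\<dots> \<le> CARD('a) ^ g" using m by (intro power_increasing) auto
    finally show "irr_count TYPE('a) m \<le> CARD('a) ^ g" .
    show "m ^ r \<le> g ^ r" using m by (intro power_mono) auto
  qed
  also have "\<dots> = g ^ (r + 1) * CARD('a) ^ g" by simp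
  finally show ?thesis .
qed

lemma norm_chi_hat_le:
  assumes "0 \<le> \<beta>" shows "norm (chi_hat \<beta> k) \<le> \<beta>"
proof -
  have "norm (chi_hat \<beta> k) \<le> 1 * (\<beta>/2 - (-\<beta>/2))"
    unfolding chi_hat_def
  proof (rule integral_bound)
    show "continuous_on {- \<beta> / 2..\<beta> / 2} (\<lambda>x. e (- (of_int k * x)))"
      unfolding e_def by (intro continuous_intros)
  qed (use assms in \<open>auto simp: e_def\<close>)
  then show ?thesis by simp
qed

lemma BS_coeffs_norm_le:
  assumes "BS_coeffs \<beta> s Ih" and "0 \<le> \<beta>" and "K \<ge> 1"
  shows "norm (Ih K k) \<le> \<beta> + 1"
proof -
  have "norm (Ih K k - chi_hat \<beta> k) \<le> 1 / (real K + 1)"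
    using assms(1,3) unfolding BS_coeffs_def by blast
  also have "\<dots> \<le> 1" by (simp add: field_simps)
  finally show ?thesis
    using norm_chi_hat_le[OF assms(2), of k] norm_triangle_ineq[of "Ih K k - chi_hat \<beta> k" "chi_hat \<beta> k"]
    by simp
qed

lemma summable_sq_times_geometric:
  fixes z :: real
  assumes "\<bar>z\<bar> < 1"
  shows "summable (\<lambda>j. real j ^ 2 * z ^ j)"
proof (rule summable_comparison_test)
  \<comment> \<open>twice differentiated geometric series: diffs (diffs (\<lambda>_. 1)) j = (j + 1) (j + 2)\<close>
  show "summable (\<lambda>j. diffs (diffs (\<lambda>_. 1)) j * \<bar>z\<bar> ^ j)"
    using assms by (intro termdiff_converges[where K=1]) (auto intro: summable_geometric)
  show "\<exists>N. \<forall>j\<ge>N. norm (real j ^ 2 * z ^ j) \<le> diffs (diffs (\<lambda>_. 1)) j * \<bar>z\<bar> ^ j"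
    by (auto simp: diffs_def power2_eq_square abs_mult power_abs intro!: mult_right_mono mult_mono)
qed

lemma norm_sum_PiE_le_suminf_power:
  fixes T :: "('i \<Rightarrow> nat) \<Rightarrow> 'b::real_normed_vector" and f :: "nat \<Rightarrow> real"
  assumes "finite I" and "finite J" and "summable f" and "\<And>j. 0 \<le> f j" and "0 \<le> c"
    and "\<And>k. k \<in> PiE I (\<lambda>_. J) \<Longrightarrow> norm (T k) \<le> c * (\<Prod>i\<in>I. f (k i))"
  shows "norm (\<Sum>k\<in>PiE I (\<lambda>_. J). T k) \<le> c * suminf f ^ card I"
proof -
  have "norm (\<Sum>k\<in>PiE I (\<lambda>_. J). T k) \<le> (\<Sum>k\<in>PiE I (\<lambda>_. J). c * (\<Prod>i\<in>I. f (k i)))"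
    using assms(6) by (rule sum_norm_le)
  also have "\<dots> = c * (\<Prod>i\<in>I. \<Sum>j\<in>J. f j)"
    using prod_sum_PiE[OF assms(1), of "\<lambda>_. J" "\<lambda>_. f"] assms(2) by (simp add: sum_distrib_left)
  also have "\<dots> \<le> c * (\<Prod>i\<in>I. suminf f)"
    using assms by (intro mult_left_mono prod_mono conjI sum_le_suminf sum_nonneg) auto
  finally show ?thesis by simp
qed

lemma power_Suc_le_prod_squares:
  fixes g :: nat and k :: "nat \<Rightarrow> nat"
  assumes "1 \<le> r" and "\<And>i. i < r \<Longrightarrow> g \<le> k i"
  shows "g ^ (r + 1) \<le> (\<Prod>i<r. k i ^ 2)"
proof (cases "g = 0")
  case False
  then have "g ^ (r + 1) \<le> g ^ (2 * r)"
    using assms(1) by (intro power_increasing) auto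
  also have "\<dots> = (\<Prod>i<r. g ^ 2)"
    by (simp add: power_mult)
  also have "\<dots> \<le> (\<Prod>i<r. k i ^ 2)"
    using assms(2) by (intro prod_mono power_mono) auto
  finally show ?thesis .
qed simp

lemma powr_neg_half_sum_times_power_le:
  fixes q :: real and k :: "nat \<Rightarrow> nat"
  assumes "1 \<le> q" and "3 \<le> r" and "\<And>i. i < r \<Longrightarrow> g \<le> k i"
  shows "q powr (- real (\<Sum>i<r. k i) / 2) * q ^ g \<le> (\<Prod>i<r. (q powr (-1/6)) ^ k i)"
proof -
  define S where "S = (\<Sum>i<r. k i)"
  have "r * g \<le> S"
    using sum_mono[of "{..<r}" "\<lambda>_. g" k] assms(3) by (simp add: S_def)
  then have "3 * g \<le> S"
    using assms(2) by (meson le_trans mult_le_mono1)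
  have "q powr (- real S / 2) * q ^ g = q powr (- real S / 2 + real g)"
    using assms(1) by (simp only: powr_add powr_realpow[of q g, symmetric])
  also have "\<dots> \<le> q powr (- real S / 6)"
    using \<open>3 * g \<le> S\<close> assms(1) by (intro powr_mono) auto
  also have "\<dots> = (\<Prod>i<r. q powr (- real (k i) / 6))"
    using assms(1) by (simp add: S_def powr_sum[symmetric] sum_negf sum_divide_distrib)
  also have "\<dots> = (\<Prod>i<r. (q powr (-1/6)) ^ k i)"
    using assms(1) by (simp add: powr_realpow[symmetric] powr_powr)
  finally show ?thesis unfolding S_def .
qed

lemma powr_times_sum_irr_count_le:
  fixes k :: "nat \<Rightarrow> nat"
  assumes "3 \<le> r" and "\<And>i. i < r \<Longrightarrow> 1 \<le> k i" and "A \<subseteq> {m. m dvd Gcd (k ` {..<r})}"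
  shows "real CARD('a) powr (- real (\<Sum>i<r. k i) / 2)
           * real (\<Sum>m\<in>A. irr_count TYPE('a::{field,finite}) m * m ^ r)
         \<le> (\<Prod>i<r. real (k i) ^ 2 * (real CARD('a) powr (-1/6)) ^ k i)"
proof -
  define g where "g = Gcd (k ` {..<r})"
  define q where "q = real CARD('a)"
  have g_dvd: "g dvd k i" if "i < r" for i
    unfolding g_def using that by (intro Gcd_dvd) simp
  have g_le: "g \<le> k i" if "i < r" for i
    using g_dvd[OF that] assms(2)[OF that] by (intro dvd_imp_le) simp_all
  have "g \<noteq> 0"
    using g_dvd[of 0] assms(1) assms(2)[of 0] by auto
  have "1 \<le> q" by (simp add: q_def Suc_le_eq)
  have "(\<Sum>m\<in>A. irr_count TYPE('a) m * m ^ r) \<le> g ^ (r + 1) * CARD('a) ^ g"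
    using \<open>g \<noteq> 0\<close> assms(3) unfolding g_def by (rule sum_irr_count_divisors_le)
  then have "real (\<Sum>m\<in>A. irr_count TYPE('a) m * m ^ r) \<le> real (g ^ (r + 1)) * q ^ g"
    unfolding q_def of_nat_power[symmetric] of_nat_mult[symmetric] of_nat_le_iff .
  then have "q powr (- real (\<Sum>i<r. k i) / 2) * real (\<Sum>m\<in>A. irr_count TYPE('a) m * m ^ r)
      \<le> q powr (- real (\<Sum>i<r. k i) / 2) * (real (g ^ (r + 1)) * q ^ g)"
    by (rule mult_left_mono) simp
  also have "\<dots> = (q powr (- real (\<Sum>i<r. k i) / 2) * q ^ g) * real (g ^ (r + 1))"
    by (simp only: mult_ac)
  also have "\<dots> \<le> (\<Prod>i<r. (q powr (-1/6)) ^ k i) * (\<Prod>i<r. real (k i) ^ 2)"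
  proof (intro mult_mono)
    show "q powr (- real (\<Sum>i<r. k i) / 2) * q ^ g \<le> (\<Prod>i<r. (q powr (-1/6)) ^ k i)"
      using \<open>1 \<le> q\<close> assms(1) g_le by (rule powr_neg_half_sum_times_power_le)
    have "g ^ (r + 1) \<le> (\<Prod>i<r. k i ^ 2)"
      using assms(1) g_le by (intro power_Suc_le_prod_squares) auto
    then show "real (g ^ (r + 1)) \<le> (\<Prod>i<r. real (k i) ^ 2)"
      unfolding of_nat_power[symmetric] of_nat_prod[symmetric] of_nat_le_iff .
  qed (auto intro: prod_nonneg)
  also have "\<dots> = (\<Prod>i<r. real (k i) ^ 2 * (q powr (-1/6)) ^ k i)"
    by (simp add: prod.distrib mult.commute)
  finally show ?thesis unfolding q_def .
qed

lemma norm_summand_le: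
  fixes c :: "int \<Rightarrow> complex" and k :: "nat \<Rightarrow> nat"
  assumes "3 \<le> r" and "\<And>i. i < r \<Longrightarrow> 1 \<le> k i" and "A \<subseteq> {m. m dvd Gcd (k ` {..<r})}"
    and "\<And>j. norm (c j) \<le> B"
  shows "norm ((\<Prod>i<r. c (int (k i)))
            * complex_of_real (real CARD('a) powr (- real (\<Sum>i<r. k i) / 2))
            * of_nat (\<Sum>m\<in>A. irr_count TYPE('a::{field,finite}) m * m ^ r))
         \<le> B ^ r * (\<Prod>i<r. real (k i) ^ 2 * (real CARD('a) powr (-1/6)) ^ k i)"
proof -
  have "norm (\<Prod>i<r. c (int (k i))) \<le> B ^ r"
    using assms(4) prod_mono[of "{..<r}" "\<lambda>i. norm (c (int (k i)))" "\<lambda>_. B"]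
    by (auto intro: order.trans[OF norm_prod_le])
  moreover have "0 \<le> B"
    using order.trans[OF norm_ge_zero assms(4)] .
  ultimately show ?thesis
    unfolding norm_mult norm_of_real norm_of_nat abs_of_nonneg[OF powr_ge_zero] mult.assoc
    using powr_times_sum_irr_count_le[OF assms(1-3)]
    by (intro mult_mono mult_nonneg_nonneg) (auto intro: sum_nonneg)
qed

theorem lemma9p3:
  fixes p n q r :: nat and \<beta> s :: real and Ih :: "nat \<Rightarrow> int \<Rightarrow> complex"
  assumes "prime p" and "odd p" and "n \<ge> 1" and "q = p ^ n"
    and "CARD('a::{field,finite}) = q"
    and "0 < \<beta>" and "\<beta> < 1"
    and "s \<in> {1, -1}" and "BS_coeffs \<beta> s Ih"
    and "r > 2"
  shows "\<exists>C. \<forall>K\<ge>1.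
    norm (\<Sum>k\<in>PiE {..<r} (\<lambda>_. {1..K}).
            (\<Prod>i<r. Ih K (int (k i)))
          * complex_of_real (real q powr (- real (\<Sum>i<r. k i) / 2))
          * of_nat (\<Sum>m\<in>{m. m dvd Gcd (k ` {..<r}) \<and> \<not> (m * p) dvd Gcd (k ` {..<r})}.
                      irr_count TYPE('a) m * m ^ r)) \<le> C"
proof -
  have "card {0, 1 :: 'a} \<le> CARD('a)"
    by (rule card_mono) auto
  then have "\<bar>real CARD('a) powr (-1/6)\<bar> < 1"
    by (simp add: powr_less_one)
  then have "summable (\<lambda>j. real j ^ 2 * (real CARD('a) powr (-1/6)) ^ j)"
    by (rule summable_sq_times_geometric)
  moreover have "norm (Ih K j) \<le> \<beta> + 1" if "K \<ge> 1" for K j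
    using BS_coeffs_norm_le[OF assms(9) _ that] assms(6) by simp
  ultimately show ?thesis
    unfolding assms(5)[symmetric] using assms(6,10)
    by (intro exI[of _ "(\<beta> + 1) ^ r * (\<Sum>j. real j ^ 2 * (real CARD('a) powr (-1/6)) ^ j) ^ card {..<r}"]
        allI impI norm_sum_PiE_le_suminf_power norm_summand_le) (auto simp: PiE_iff)
qed

end
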